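(* For all $n\ge 1$, \[\left|\mathrm{Av}_{n+2}[\overline{132},\overline{213},\overline{321}]\right|=\left|\mathcal{R}_n\right|.\]
   Context: For $\sigma\in S_m$, the cyclic permutation $[\sigma]$ is the set of all rotations of $\sigma$. $[\sigma]$ contains the totally vincular cyclic pattern $[\overline{abc}]$ (with $abc\in S_3$) if there are three cyclically consecutive entries $\sigma_i\sigma_{i+1}\sigma_{i+2}$ (indices mod $m$) order-isomorphic to $abc$; $\mathrm{Av}_m[\overline{132},\overline{213},\overline{321}]$ is the set of cyclic permutations of length $m$ containing none of these three patterns. A partial cyclic order on a set $X$ is a ternary relation $Z\subseteq X^3$ such that for all $x,y,z,u\in X$: $(x,y,z)\in Z\Rightarrow(y,z,x)\in Z$; $(x,y,z)\in Z\Rightarrow(z,y,x)\notin Z$; and $(x,y,z)\in Z$ and $(x,z,u)\in Z\Rightarrow(x,y,u)\in Z$. It is a total cyclic order if for every triple $(x,y,z)$ of distinct elements, $(x,y,z)\in Z$ or $(z,y,x)\in Z$. $\mathcal{R}_n$ is the set of total cyclic orders $Z$ on $[n+2]$ with $(i,i+1,i+2)\in Z$ for all $1\le i\le n$, $(n+1,n+2,1)\in Z$ and $(n+2,1,2)\in Z$. *)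

theory Defs
  imports Main
begin

definition perms :: "nat \<Rightarrow> nat list set" where
  "perms m = {s. distinct s \<and> set s = {1..m}}"

text \<open>The cyclic permutation [s]: the set of all rotations of s.\<close>
definition cyc :: "nat list \<Rightarrow> nat list set" where
  "cyc s = {rotate k s | k. k < length s}"

definition order_iso3 :: "nat list \<Rightarrow> nat list \<Rightarrow> bool" where
  "order_iso3 xs ps \<longleftrightarrow> length xs = 3 \<and> length ps = 3 \<and>
     (\<forall>j<3. \<forall>k<3. (xs ! j < xs ! k \<longleftrightarrow> ps ! j < ps ! k))"

text \<open>[s] contains the totally vincular cyclic pattern [overline{p}] (p in S_3):
  three cyclically consecutive entries (indices mod m) order-isomorphic to p.\<close>
definition cyc_contains :: "nat list \<Rightarrow> nat list \<Rightarrow> bool" where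
  "cyc_contains s p \<longleftrightarrow> (\<exists>i<length s.
     order_iso3 [s ! i, s ! ((i + 1) mod length s), s ! ((i + 2) mod length s)] p)"

definition Av :: "nat \<Rightarrow> nat list set set" where
  "Av m = {cyc s | s. s \<in> perms m \<and>
      \<not> cyc_contains s [1,3,2] \<and> \<not> cyc_contains s [2,1,3] \<and> \<not> cyc_contains s [3,2,1]}"

definition partial_cyclic_order :: "'a set \<Rightarrow> ('a \<times> 'a \<times> 'a) set \<Rightarrow> bool" where
  "partial_cyclic_order X Z \<longleftrightarrow> Z \<subseteq> X \<times> X \<times> X \<and>
    (\<forall>x\<in>X. \<forall>y\<in>X. \<forall>z\<in>X. \<forall>u\<in>X.
       ((x,y,z) \<in> Z \<longrightarrow> (y,z,x) \<in> Z) \<and>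
       ((x,y,z) \<in> Z \<longrightarrow> (z,y,x) \<notin> Z) \<and>
       ((x,y,z) \<in> Z \<and> (x,z,u) \<in> Z \<longrightarrow> (x,y,u) \<in> Z))"

definition total_cyclic_order :: "'a set \<Rightarrow> ('a \<times> 'a \<times> 'a) set \<Rightarrow> bool" where
  "total_cyclic_order X Z \<longleftrightarrow> partial_cyclic_order X Z \<and>
    (\<forall>x\<in>X. \<forall>y\<in>X. \<forall>z\<in>X. x \<noteq> y \<and> y \<noteq> z \<and> x \<noteq> z \<longrightarrow>
       (x,y,z) \<in> Z \<or> (z,y,x) \<in> Z)"

definition R :: "nat \<Rightarrow> (nat \<times> nat \<times> nat) set set" where
  "R n = {Z. total_cyclic_order {1..n+2} Z \<and>
      (\<forall>i. 1 \<le> i \<and> i \<le> n \<longrightarrow> (i, i+1, i+2) \<in> Z) \<and>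
      (n+1, n+2, 1) \<in> Z \<and> (n+2, 1, 2) \<in> Z}"

end

theory Submission
  imports Defs
begin

(* A cyclically consecutive triple of distinct entries avoids 132, 213 and 321 exactly when it is
   order-isomorphic to 123, 231 or 312, i.e. when it is cyclically ascending.  Taking in every
   cyclic class the rotation that starts with 1, Av_(n+2) is in bijection with the permutations s
   of [n+2] with s_1 = 1 all of whose cyclic windows are cyclically ascending.  Such an s defines a
   total cyclic order on the positions, (a,b,c) being a triple iff (s_a,s_b,s_c) is cyclically
   ascending, and the window condition is precisely the defining condition of R_n.  Conversely, a
   total cyclic order on a finite set, cut open at a point p, is a linear order; numbering the
   elements by their ranks in it recovers the cyclic order, and the numbering is the only one
   inducing it with p numbered 1. *)

section \<open>Total cyclic orders on finite sets\<close>

definition cyclically_ordered :: "('a \<Rightarrow> 'a \<Rightarrow> bool) \<Rightarrow> 'a \<Rightarrow> 'a \<Rightarrow> 'a \<Rightarrow> bool" where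
  "cyclically_ordered lt x y z \<longleftrightarrow> (lt x y \<and> lt y z) \<or> (lt y z \<and> lt z x) \<or> (lt z x \<and> lt x y)"

definition induced_cyclic_order :: "'a set \<Rightarrow> ('a \<Rightarrow> 'b::linorder) \<Rightarrow> ('a \<times> 'a \<times> 'a) set" where
  "induced_cyclic_order X f =
     {(a, b, c). a \<in> X \<and> b \<in> X \<and> c \<in> X \<and> cyclically_ordered (\<lambda>x y. f x < f y) a b c}"

text \<open>The linear order obtained by cutting the cyclic order \<open>Z\<close> open at \<open>p\<close>.\<close>

definition cut_order :: "('a \<times> 'a \<times> 'a) set \<Rightarrow> 'a \<Rightarrow> 'a \<Rightarrow> 'a \<Rightarrow> bool" where
  "cut_order Z p b c \<longleftrightarrow> b \<noteq> c \<and> (b = p \<or> (p, b, c) \<in> Z)"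

lemma cyclically_ordered_either_way:
  assumes "lt a b \<or> lt b a" "lt b c \<or> lt c b" "lt c a \<or> lt a c"
  shows "cyclically_ordered lt a b c \<or> cyclically_ordered lt c b a"
  using assms unfolding cyclically_ordered_def by blast

lemma total_cyclic_order_induced:
  assumes "inj_on f X"
  shows "total_cyclic_order X (induced_cyclic_order X f)"
proof -
  have "f a < f b \<or> f b < f a" if "a \<in> X" "b \<in> X" "a \<noteq> b" for a b
    using assms that by (metis inj_onD linorder_neq_iff)
  then show ?thesis
    unfolding total_cyclic_order_def partial_cyclic_order_def induced_cyclic_order_def
      cyclically_ordered_def
    by auto
qed

lemma cut_order_irrefl: "\<not> cut_order Z p a a"
  unfolding cut_order_def by blast

context
  fixes X :: "'a set" and Z :: "('a \<times> 'a \<times> 'a) set"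
  assumes Z: "total_cyclic_order X Z"
begin

lemma total_cyclic_order_memD: "(a, b, c) \<in> Z \<Longrightarrow> a \<in> X \<and> b \<in> X \<and> c \<in> X"
  using Z unfolding total_cyclic_order_def partial_cyclic_order_def by blast

lemma total_cyclic_order_rotate: "(a, b, c) \<in> Z \<Longrightarrow> (b, c, a) \<in> Z"
  using Z unfolding total_cyclic_order_def partial_cyclic_order_def by blast

lemma total_cyclic_order_asym: "(a, b, c) \<in> Z \<Longrightarrow> (c, b, a) \<notin> Z"
  using Z unfolding total_cyclic_order_def partial_cyclic_order_def by blast

lemma total_cyclic_order_trans: "(a, b, c) \<in> Z \<Longrightarrow> (a, c, d) \<in> Z \<Longrightarrow> (a, b, d) \<in> Z"
  using Z unfolding total_cyclic_order_def partial_cyclic_order_def by blast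

lemma total_cyclic_order_total:
  "a \<in> X \<Longrightarrow> b \<in> X \<Longrightarrow> c \<in> X \<Longrightarrow> a \<noteq> b \<Longrightarrow> b \<noteq> c \<Longrightarrow> a \<noteq> c \<Longrightarrow>
    (a, b, c) \<in> Z \<or> (c, b, a) \<in> Z"
  using Z unfolding total_cyclic_order_def by blast

lemma total_cyclic_order_distinct: "(a, b, c) \<in> Z \<Longrightarrow> a \<noteq> b \<and> b \<noteq> c \<and> a \<noteq> c"
  using total_cyclic_order_rotate total_cyclic_order_asym by metis

lemma total_cyclic_order_through_point: "(p, a, b) \<in> Z \<Longrightarrow> (p, b, c) \<in> Z \<Longrightarrow> (a, b, c) \<in> Z"
  using total_cyclic_order_memD total_cyclic_order_distinct total_cyclic_order_total
    total_cyclic_order_rotate total_cyclic_order_asym total_cyclic_order_trans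
  by metis

lemma cut_order_trans: "cut_order Z p a b \<Longrightarrow> cut_order Z p b c \<Longrightarrow> cut_order Z p a c"
  unfolding cut_order_def using total_cyclic_order_trans total_cyclic_order_distinct by metis

lemma cut_order_total:
  "p \<in> X \<Longrightarrow> a \<in> X \<Longrightarrow> b \<in> X \<Longrightarrow> a \<noteq> b \<Longrightarrow> cut_order Z p a b \<or> cut_order Z p b a"
  unfolding cut_order_def using total_cyclic_order_total total_cyclic_order_rotate by metis

lemma not_cut_order_before_point: "\<not> cut_order Z p a p"
  unfolding cut_order_def using total_cyclic_order_distinct by blast

lemma cut_order_chain_mem: "cut_order Z p a b \<Longrightarrow> cut_order Z p b c \<Longrightarrow> (a, b, c) \<in> Z"
  unfolding cut_order_def using total_cyclic_order_distinct total_cyclic_order_through_point by metis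

lemma total_cyclic_order_iff_cut_order:
  assumes "p \<in> X" "a \<in> X" "b \<in> X" "c \<in> X"
  shows "(a, b, c) \<in> Z \<longleftrightarrow> cyclically_ordered (cut_order Z p) a b c"
proof
  assume abc: "(a, b, c) \<in> Z"
  then have "a \<noteq> b" "b \<noteq> c" "c \<noteq> a"
    using total_cyclic_order_distinct by auto
  with assms have "cyclically_ordered (cut_order Z p) a b c \<or> cyclically_ordered (cut_order Z p) c b a"
    by (intro cyclically_ordered_either_way cut_order_total) auto
  moreover have "\<not> cyclically_ordered (cut_order Z p) c b a"
    using abc total_cyclic_order_asym total_cyclic_order_rotate cut_order_chain_mem
    unfolding cyclically_ordered_def by metis
  ultimately show "cyclically_ordered (cut_order Z p) a b c"
    by blast
next
  assume "cyclically_ordered (cut_order Z p) a b c"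
  then show "(a, b, c) \<in> Z"
    using total_cyclic_order_rotate cut_order_chain_mem unfolding cyclically_ordered_def by metis
qed

end

lemma strict_linear_order_rank:
  assumes "finite X"
    and irrefl: "\<And>a. \<not> lt a a"
    and trans: "\<And>a b c. lt a b \<Longrightarrow> lt b c \<Longrightarrow> lt a c"
    and total: "\<And>a b. a \<in> X \<Longrightarrow> b \<in> X \<Longrightarrow> a \<noteq> b \<Longrightarrow> lt a b \<or> lt b a"
  defines "rk a \<equiv> Suc (card {b \<in> X. lt b a})"
  shows "bij_betw rk X {1..card X}"
    and "a \<in> X \<Longrightarrow> b \<in> X \<Longrightarrow> rk a < rk b \<longleftrightarrow> lt a b"
proof -
  have mono: "rk a < rk b" if "a \<in> X" "lt a b" for a b
  proof -
    have "{x \<in> X. lt x a} \<subset> {x \<in> X. lt x b}"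
      using that irrefl trans by blast
    then show ?thesis
      unfolding rk_def using \<open>finite X\<close> by (simp add: psubset_card_mono)
  qed
  show iff: "rk a < rk b \<longleftrightarrow> lt a b" if "a \<in> X" "b \<in> X" for a b
    using that mono total[of a b] by (metis less_asym less_irrefl)
  have "inj_on rk X"
    by (rule inj_onI) (metis iff less_irrefl total)
  moreover have "rk ` X \<subseteq> {1..card X}"
  proof
    fix r assume "r \<in> rk ` X"
    then obtain a where "a \<in> X" "r = rk a" by blast
    moreover have "card {b \<in> X. lt b a} \<le> card (X - {a})"
      using \<open>finite X\<close> irrefl by (intro card_mono) auto
    moreover have "card X > 0"
      using \<open>a \<in> X\<close> \<open>finite X\<close> card_gt_0_iff by blast
    ultimately show "r \<in> {1..card X}"
      using \<open>finite X\<close> by (simp add: rk_def card_Diff_singleton)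
  qed
  ultimately show "bij_betw rk X {1..card X}"
    unfolding bij_betw_def by (simp add: card_image card_subset_eq)
qed

lemma bij_betw_interval_eq_rank:
  assumes f: "bij_betw f X {1..k}" and a: "a \<in> X"
  shows "f a = Suc (card {b \<in> X. f b < f a})"
proof -
  have fa: "f a \<in> {1..k}"
    using f a by (rule bij_betw_apply)
  have "f ` {b \<in> X. f b < f a} = {y \<in> f ` X. y < f a}"
    by blast
  also have "\<dots> = {1..<f a}"
    using f fa unfolding bij_betw_def by auto
  finally have "card {b \<in> X. f b < f a} = card {1..<f a}"
    using f unfolding bij_betw_def
    by (metis (no_types, lifting) card_image inj_on_subset mem_Collect_eq subsetI)
  then show ?thesis
    using fa by simp
qed

lemma cut_order_induced:
  assumes inj: "inj_on f X" and p: "p \<in> X" "\<forall>x\<in>X. f p \<le> f x"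
    and "b \<in> X" "c \<in> X"
  shows "cut_order (induced_cyclic_order X f) p b c \<longleftrightarrow> f b < f c"
proof -
  have "f p < f x" if "x \<in> X" "x \<noteq> p" for x
    using p inj that by (metis inj_on_eq_iff order_le_neq_trans)
  with assms show ?thesis
    unfolding cut_order_def induced_cyclic_order_def cyclically_ordered_def
    by (auto simp: inj_on_eq_iff)
qed

lemma total_cyclic_order_induced_by_numbering:
  assumes Z: "total_cyclic_order X Z" and "finite X" "p \<in> X"
  obtains f where "bij_betw f X {1..card X}" "f p = 1" "Z = induced_cyclic_order X f"
proof
  define f where "f a = Suc (card {b \<in> X. cut_order Z p b a})" for a
  note rank = strict_linear_order_rank[of X "cut_order Z p", OF \<open>finite X\<close>
      cut_order_irrefl cut_order_trans[OF Z] cut_order_total[OF Z \<open>p \<in> X\<close>], folded f_def]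
  show "bij_betw f X {1..card X}"
    by (rule rank(1))
  show "f p = 1"
    unfolding f_def using not_cut_order_before_point[OF Z] by simp
  have "(a, b, c) \<in> Z \<longleftrightarrow> (a, b, c) \<in> induced_cyclic_order X f" for a b c
  proof (cases "a \<in> X \<and> b \<in> X \<and> c \<in> X")
    case True
    then have "cyclically_ordered (cut_order Z p) a b c \<longleftrightarrow> cyclically_ordered (\<lambda>x y. f x < f y) a b c"
      using rank(2) unfolding cyclically_ordered_def by auto
    with True show ?thesis
      using total_cyclic_order_iff_cut_order[OF Z \<open>p \<in> X\<close>] by (simp add: induced_cyclic_order_def)
  next
    case False
    then show ?thesis
      using total_cyclic_order_memD[OF Z] by (auto simp: induced_cyclic_order_def)
  qed
  then show "Z = induced_cyclic_order X f"
    by (simp add: set_eq_iff)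
qed

lemma induced_cyclic_order_numbering_unique:
  fixes f g :: "'a \<Rightarrow> nat"
  assumes f: "bij_betw f X {1..k}" and g: "bij_betw g X {1..k}"
    and p: "p \<in> X" "f p = 1" "g p = 1"
    and eq: "induced_cyclic_order X f = induced_cyclic_order X g"
    and a: "a \<in> X"
  shows "f a = g a"
proof -
  have "\<forall>x\<in>X. f p \<le> f x" "\<forall>x\<in>X. g p \<le> g x"
    using f g p by (auto dest: bij_betw_apply)
  then have "{b \<in> X. f b < f a} = {b \<in> X. g b < g a}"
    using f g p a eq cut_order_induced[of f X p] cut_order_induced[of g X p]
    by (auto simp: bij_betw_def)
  then show ?thesis
    using bij_betw_interval_eq_rank[OF f a] bij_betw_interval_eq_rank[OF g a] by simp
qed

section \<open>Avoiding the three cyclic patterns\<close>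

definition cyclically_ascending :: "nat list \<Rightarrow> bool" where
  "cyclically_ascending s \<longleftrightarrow> (\<forall>i<length s.
     cyclically_ordered (<) (s ! i) (s ! ((i + 1) mod length s)) (s ! ((i + 2) mod length s)))"

lemma order_iso3_iff:
  "order_iso3 [x, y, z] [p, q, r] \<longleftrightarrow>
     (x < y \<longleftrightarrow> p < q) \<and> (y < x \<longleftrightarrow> q < p) \<and> (x < z \<longleftrightarrow> p < r) \<and>
     (z < x \<longleftrightarrow> r < p) \<and> (y < z \<longleftrightarrow> q < r) \<and> (z < y \<longleftrightarrow> r < q)"
  unfolding order_iso3_def by (auto simp: numeral_3_eq_3 less_Suc_eq)

lemma avoids_patterns_iff_cyclically_ordered:
  assumes "x \<noteq> y" "y \<noteq> z" "x \<noteq> z"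
  shows "\<not> order_iso3 [x, y, z] [1, 3, 2] \<and> \<not> order_iso3 [x, y, z] [2, 1, 3] \<and>
      \<not> order_iso3 [x, y, z] [3, 2, 1] \<longleftrightarrow> cyclically_ordered (<) x y z"
  using assms unfolding order_iso3_iff cyclically_ordered_def by auto

lemma successor_indices_distinct:
  fixes L i :: nat
  assumes "3 \<le> L" "i < L"
  shows "i \<noteq> (i + 1) mod L" "(i + 1) mod L \<noteq> (i + 2) mod L" "i \<noteq> (i + 2) mod L"
  using assms by (auto simp: mod_if split: if_splits)

lemma avoids_patterns_iff_cyclically_ascending:
  assumes "distinct s" "length s \<ge> 3"
  shows "\<not> cyc_contains s [1, 3, 2] \<and> \<not> cyc_contains s [2, 1, 3] \<and> \<not> cyc_contains s [3, 2, 1]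
     \<longleftrightarrow> cyclically_ascending s"
proof -
  let ?L = "length s"
  have "s ! i \<noteq> s ! ((i + 1) mod ?L) \<and> s ! ((i + 1) mod ?L) \<noteq> s ! ((i + 2) mod ?L) \<and>
      s ! i \<noteq> s ! ((i + 2) mod ?L)" if "i < ?L" for i
  proof -
    have "0 < ?L"
      using that by linarith
    with successor_indices_distinct[OF assms(2) that] show ?thesis
      using assms(1) that by (simp add: nth_eq_iff_index_eq)
  qed
  then show ?thesis
    unfolding cyc_contains_def cyclically_ascending_def
    using avoids_patterns_iff_cyclically_ordered by blast
qed

lemma cyc_eq_rotations: "s \<noteq> [] \<Longrightarrow> cyc s = range (\<lambda>k. rotate k s)"
  unfolding cyc_def by (auto, metis rotate_conv_mod mod_less_divisor length_greater_0_conv)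

lemma cyc_rotate: "cyc (rotate k s) = cyc s"
proof (cases "s = []")
  case False
  let ?L = "length s"
  have "rotate j s = rotate (j + (?L - 1) * k) (rotate k s)" for j
  proof -
    have "j + (?L - 1) * k + k = j + k * ?L"
      using False by (cases ?L) (simp_all add: algebra_simps)
    then show ?thesis
      by (metis rotate_rotate rotate_conv_mod mod_mult_self1)
  qed
  then show ?thesis
    using False by (auto simp: cyc_eq_rotations rotate_rotate)
qed simp

lemma cyc_contains_rotate:
  assumes "cyc_contains (rotate k s) p"
  shows "cyc_contains s p"
proof -
  let ?L = "length s"
  from assms obtain i where i: "i < ?L" and
    iso: "order_iso3 [rotate k s ! i, rotate k s ! ((i + 1) mod ?L), rotate k s ! ((i + 2) mod ?L)] p"
    unfolding cyc_contains_def by auto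
  have L: "0 < ?L"
    using i by linarith
  have nth_shift: "rotate k s ! ((i + c) mod ?L) = s ! (((k + i) mod ?L + c) mod ?L)" for c
  proof -
    have "rotate k s ! ((i + c) mod ?L) = s ! ((k + (i + c) mod ?L) mod ?L)"
      using L by (simp add: nth_rotate)
    also have "(k + (i + c) mod ?L) mod ?L = ((k + i) mod ?L + c) mod ?L"
      by (simp add: mod_add_right_eq mod_add_left_eq add.assoc)
    finally show ?thesis .
  qed
  have "(k + i) mod ?L < ?L"
    using L by simp
  moreover have "rotate k s ! i = s ! ((k + i) mod ?L)"
    using nth_shift[of 0] i by simp
  ultimately show ?thesis
    unfolding cyc_contains_def using iso nth_shift[of 1] nth_shift[of 2] by auto
qed

lemma perms_length:
  assumes "s \<in> perms m"
  shows "length s = m"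
proof -
  from assms have "distinct s" "set s = {1..m}"
    by (simp_all add: perms_def)
  then show ?thesis
    using distinct_card[of s] by simp
qed

definition rooted_ascending_perms :: "nat \<Rightarrow> nat list set" where
  "rooted_ascending_perms m = {s \<in> perms m. s ! 0 = 1 \<and> cyclically_ascending s}"

lemma Av_eq:
  assumes "3 \<le> m"
  shows "Av m = {cyc s | s. s \<in> perms m \<and> cyclically_ascending s}"
proof -
  have "\<not> cyc_contains s [1, 3, 2] \<and> \<not> cyc_contains s [2, 1, 3] \<and> \<not> cyc_contains s [3, 2, 1]
      \<longleftrightarrow> cyclically_ascending s" if "s \<in> perms m" for s
    using that assms perms_length[OF that] avoids_patterns_iff_cyclically_ascending[of s]
    by (simp add: perms_def)
  then show ?thesis
    unfolding Av_def by blast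
qed

lemma cyclically_ascending_rotate:
  assumes "distinct s" "3 \<le> length s" "cyclically_ascending s"
  shows "cyclically_ascending (rotate k s)"
proof -
  have "distinct (rotate k s)" "3 \<le> length (rotate k s)"
    using assms by simp_all
  with assms show ?thesis
    using avoids_patterns_iff_cyclically_ascending cyc_contains_rotate[of k s] by metis
qed

lemma inj_on_cyc_perms: "inj_on cyc {s \<in> perms m. s ! 0 = 1}"
proof (rule inj_onI)
  fix s t assume "s \<in> {s \<in> perms m. s ! 0 = 1}" "t \<in> {s \<in> perms m. s ! 0 = 1}"
  then have s: "s \<in> perms m" "s ! 0 = 1" and t: "t \<in> perms m" "t ! 0 = 1"
    by simp_all
  assume eq: "cyc s = cyc t"
  have len: "length s = m" "length t = m"
    using perms_length s(1) t(1) by blast+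
  show "s = t"
  proof (cases "m = 0")
    case False
    have "t \<in> cyc s"
      using eq len False unfolding cyc_def by (auto intro: exI[of _ 0])
    then obtain k where k: "k < m" and tk: "t = rotate k s"
      using len unfolding cyc_def by auto
    have "s ! k = s ! 0"
      using s(2) t(2) tk k len by (simp add: nth_rotate)
    then have "k = 0"
      using s(1) k len False by (simp add: perms_def nth_eq_iff_index_eq)
    then show "s = t"
      using tk by simp
  qed (use len in simp)
qed

lemma bij_betw_cyc_rooted_ascending_perms:
  assumes m: "3 \<le> m"
  shows "bij_betw cyc (rooted_ascending_perms m) (Av m)"
  unfolding bij_betw_def
proof
  show "inj_on cyc (rooted_ascending_perms m)"
    by (rule inj_on_subset[OF inj_on_cyc_perms]) (auto simp: rooted_ascending_perms_def)
  show "cyc ` rooted_ascending_perms m = Av m"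
  proof
    show "cyc ` rooted_ascending_perms m \<subseteq> Av m"
      unfolding Av_eq[OF m] rooted_ascending_perms_def by blast
  next
    show "Av m \<subseteq> cyc ` rooted_ascending_perms m"
    proof
      fix C assume "C \<in> Av m"
      then obtain s where C: "C = cyc s" and s: "s \<in> perms m" "cyclically_ascending s"
        unfolding Av_eq[OF m] by blast
      have len: "length s = m"
        using s(1) by (rule perms_length)
      have "1 \<in> set s"
        using s(1) m unfolding perms_def by auto
      then obtain k where k: "k < m" "s ! k = 1"
        using len by (auto simp: in_set_conv_nth)
      have "rotate k s \<in> rooted_ascending_perms m"
        using s k len m cyclically_ascending_rotate[of s k]
        by (simp add: rooted_ascending_perms_def perms_def nth_rotate)
      moreover have "cyc (rotate k s) = C"
        using C cyc_rotate by simp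
      ultimately show "C \<in> cyc ` rooted_ascending_perms m"
        by blast
    qed
  qed
qed

section \<open>Cyclic orders on the positions of a permutation\<close>

lemma perms_nth_bij:
  assumes "s \<in> perms m"
  shows "bij_betw (\<lambda>a. s ! (a - 1)) {1..m} {1..m}"
proof -
  have "bij_betw (\<lambda>a. a - 1) {1..m} {..<m}"
    by (rule bij_betw_byWitness[where f' = Suc]) auto
  moreover have "bij_betw ((!) s) {..<m} {1..m}"
    using assms perms_length[OF assms] by (intro bij_betw_nth) (simp_all add: perms_def)
  ultimately show ?thesis
    using bij_betw_trans by (fastforce simp: comp_def)
qed

lemma R_eq:
  "R n = {Z. total_cyclic_order {1..n+2} Z \<and>
     (\<forall>i<n+2. (Suc i, Suc ((i + 1) mod (n + 2)), Suc ((i + 2) mod (n + 2))) \<in> Z)}"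
proof -
  have "(\<forall>i. 1 \<le> i \<and> i \<le> n \<longrightarrow> (i, i+1, i+2) \<in> Z) \<and> (n+1, n+2, 1) \<in> Z \<and> (n+2, 1, 2) \<in> Z
    \<longleftrightarrow> (\<forall>i<n+2. (Suc i, Suc ((i + 1) mod (n + 2)), Suc ((i + 2) mod (n + 2))) \<in> Z)"
    (is "?R \<longleftrightarrow> (\<forall>i<n+2. ?P i)") for Z
  proof -
    have "(\<forall>i. 1 \<le> i \<and> i \<le> n \<longrightarrow> (i, i+1, i+2) \<in> Z) \<longleftrightarrow> (\<forall>i<n. ?P i)"
      by (auto simp: Suc_le_eq) (metis Suc_pred' less_eq_Suc_le)
    moreover have "?P n \<longleftrightarrow> (n+1, n+2, 1) \<in> Z" "?P (n+1) \<longleftrightarrow> (n+2, 1, 2) \<in> Z"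
      by (simp_all add: mod_Suc numeral_2_eq_2)
    moreover have "(\<forall>i<n+2. ?P i) \<longleftrightarrow> (\<forall>i<n. ?P i) \<and> ?P n \<and> ?P (n+1)"
      by (auto simp: less_Suc_eq)
    ultimately show ?thesis
      by blast
  qed
  then show ?thesis
    unfolding R_def by blast
qed

definition perm_cyclic_order :: "nat list \<Rightarrow> (nat \<times> nat \<times> nat) set" where
  "perm_cyclic_order s = induced_cyclic_order {1..length s} (\<lambda>a. s ! (a - 1))"

lemma induced_cyclic_order_cong:
  "(\<And>a. a \<in> X \<Longrightarrow> f a = g a) \<Longrightarrow> induced_cyclic_order X f = induced_cyclic_order X g"
  unfolding induced_cyclic_order_def cyclically_ordered_def by auto

lemma perm_cyclic_order_in_R_iff:
  assumes s: "s \<in> perms (n + 2)"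
  shows "perm_cyclic_order s \<in> R n \<longleftrightarrow> cyclically_ascending s"
proof -
  have len: "length s = n + 2"
    using s by (rule perms_length)
  have "total_cyclic_order {1..n+2} (perm_cyclic_order s)"
    unfolding perm_cyclic_order_def len
    using perms_nth_bij[OF s] by (intro total_cyclic_order_induced) (rule bij_betw_imp_inj_on)
  moreover have "(Suc i, Suc ((i + 1) mod (n + 2)), Suc ((i + 2) mod (n + 2))) \<in> perm_cyclic_order s
      \<longleftrightarrow> cyclically_ordered (<) (s ! i) (s ! ((i + 1) mod (n + 2))) (s ! ((i + 2) mod (n + 2)))"
    if "i < n + 2" for i
    using that by (simp add: perm_cyclic_order_def induced_cyclic_order_def cyclically_ordered_def len)
  ultimately show ?thesis
    unfolding R_eq cyclically_ascending_def len mem_Collect_eq by blast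
qed

lemma inj_on_perm_cyclic_order: "inj_on perm_cyclic_order {s \<in> perms m. s ! 0 = 1}"
proof (rule inj_onI)
  fix s t assume "s \<in> {s \<in> perms m. s ! 0 = 1}" "t \<in> {s \<in> perms m. s ! 0 = 1}"
  then have s: "s \<in> perms m" "s ! 0 = 1" and t: "t \<in> perms m" "t ! 0 = 1"
    by simp_all
  assume eq: "perm_cyclic_order s = perm_cyclic_order t"
  have len: "length s = m" "length t = m"
    using perms_length s(1) t(1) by blast+
  have ind: "induced_cyclic_order {1..m} (\<lambda>a. s ! (a - 1)) =
      induced_cyclic_order {1..m} (\<lambda>a. t ! (a - 1))"
    using eq len by (simp add: perm_cyclic_order_def)
  show "s = t"
  proof (rule nth_equalityI)
    fix i assume "i < length s"
    then have i: "Suc i \<in> {1..m}" and one: "1 \<in> {1..m}"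
      using len by auto
    have "s ! (Suc i - 1) = t ! (Suc i - 1)"
      using induced_cyclic_order_numbering_unique[OF perms_nth_bij[OF s(1)] perms_nth_bij[OF t(1)]
          one _ _ ind i] s(2) t(2)
      by simp
    then show "s ! i = t ! i"
      by simp
  qed (simp add: len)
qed

lemma total_cyclic_order_eq_perm_cyclic_order:
  assumes Z: "total_cyclic_order {1..m} Z" and m: "1 \<le> m"
  obtains s where "s \<in> perms m" "s ! 0 = 1" "perm_cyclic_order s = Z"
proof -
  obtain f where f: "bij_betw f {1..m} {1..m}" "f 1 = 1" "Z = induced_cyclic_order {1..m} f"
    using total_cyclic_order_induced_by_numbering[OF Z] m by auto
  define s where "s = map f [1..<m+1]"
  have len: "length s = m"
    by (simp add: s_def)
  have nth_s: "s ! (a - 1) = f a" if "a \<in> {1..m}" for a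
    using that unfolding s_def by (subst nth_map) (auto simp del: upt_Suc)
  have "s \<in> perms m"
    using f(1)
    by (simp add: s_def perms_def distinct_map bij_betw_def atLeastLessThanSuc_atLeastAtMost
        del: upt_Suc)
  moreover have "s ! 0 = 1"
    using nth_s[of 1] f(2) m by simp
  moreover have "perm_cyclic_order s = Z"
    unfolding perm_cyclic_order_def len f(3) using nth_s by (rule induced_cyclic_order_cong)
  ultimately show ?thesis
    using that by blast
qed

lemma bij_betw_perm_cyclic_order: "bij_betw perm_cyclic_order (rooted_ascending_perms (n + 2)) (R n)"
  unfolding bij_betw_def
proof
  show "inj_on perm_cyclic_order (rooted_ascending_perms (n + 2))"
    by (rule inj_on_subset[OF inj_on_perm_cyclic_order]) (auto simp: rooted_ascending_perms_def)
  show "perm_cyclic_order ` rooted_ascending_perms (n + 2) = R n"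
  proof
    show "perm_cyclic_order ` rooted_ascending_perms (n + 2) \<subseteq> R n"
      using perm_cyclic_order_in_R_iff by (auto simp: rooted_ascending_perms_def)
  next
    show "R n \<subseteq> perm_cyclic_order ` rooted_ascending_perms (n + 2)"
    proof
      fix Z assume Z: "Z \<in> R n"
      then have "total_cyclic_order {1..n+2} Z"
        by (simp add: R_def)
      then obtain s where s: "s \<in> perms (n + 2)" "s ! 0 = 1" "perm_cyclic_order s = Z"
        by (rule total_cyclic_order_eq_perm_cyclic_order) simp
      with Z have "cyclically_ascending s"
        using perm_cyclic_order_in_R_iff by blast
      with s show "Z \<in> perm_cyclic_order ` rooted_ascending_perms (n + 2)"
        unfolding rooted_ascending_perms_def by blast
    qed
  qed
qed

theorem theorem4p6:
  fixes n :: nat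
  assumes "n \<ge> 1"
  shows "card (Av (n + 2)) = card (R n)"
proof -
  have "card (Av (n + 2)) = card (rooted_ascending_perms (n + 2))"
    using bij_betw_cyc_rooted_ascending_perms[of "n + 2"] assms by (simp add: bij_betw_same_card)
  also have "\<dots> = card (R n)"
    using bij_betw_perm_cyclic_order by (rule bij_betw_same_card)
  finally show ?thesis .
qed

end
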